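(* In the conflict-list randomized incremental construction of the Delaunay triangulation of $n$ points in general position with uniformly random insertion order, let $T_k$ denote the work of stage $k$, i.e. $T_k=\sum_{\sigma\in\Delta(v)}\ell(\sigma)$ where $v=p_k$ is the point inserted at stage $k$, $\Delta(v)$ is the set of triangles of the Delaunay triangulation of $\{p_1,\ldots,p_k\}$ incident to $v$, and $\ell(\sigma)$ is the number of points of $P$ lying in $\sigma$. Then $\mathbb{E}[T_k^2]=O(n^2/k)$, and consequently $\sum_{k=1}^n\mathbb{E}[T_k^2]=O(n^2\log n)$.
   Context: General position: no three points collinear and no four points cocircular. The points $p_1,\ldots,p_n$ are the points of $P$ in the order of a uniformly random permutation; $\{p_1,\ldots,p_k\}$ is thus a uniformly random $k$-subset of $P$. *)

theory Defs
  imports "HOL-Analysis.Analysis" "HOL-Combinatorics.Multiset_Permutations"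
begin

type_synonym point = "real \<times> real"

definition general_position :: "point set \<Rightarrow> bool" where
  "general_position P \<longleftrightarrow>
     (\<forall>a\<in>P. \<forall>b\<in>P. \<forall>c\<in>P. a \<noteq> b \<and> a \<noteq> c \<and> b \<noteq> c \<longrightarrow> \<not> collinear {a, b, c}) \<and>
     (\<forall>a\<in>P. \<forall>b\<in>P. \<forall>c\<in>P. \<forall>d\<in>P. card {a, b, c, d} = 4 \<longrightarrow>
         \<not> (\<exists>z r. {a, b, c, d} \<subseteq> sphere z r))"

definition delaunay_triangles :: "point set \<Rightarrow> point set set" where
  "delaunay_triangles S =
     {\<sigma>. \<sigma> \<subseteq> S \<and> card \<sigma> = 3 \<and> \<not> collinear \<sigma> \<and>
          (\<exists>z r. \<sigma> \<subseteq> sphere z r \<and> (\<forall>q\<in>S. r \<le> dist q z))}"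

definition ell :: "point set \<Rightarrow> point set \<Rightarrow> nat" where
  "ell P \<sigma> = card {p \<in> P. p \<in> convex hull \<sigma>}"

text \<open>Work of stage k for insertion order ps (a list p_1, ..., p_n), 1 <= k <= n.\<close>
definition stage_work :: "point set \<Rightarrow> point list \<Rightarrow> nat \<Rightarrow> nat" where
  "stage_work P ps k =
     (\<Sum>\<sigma>\<in>{\<sigma> \<in> delaunay_triangles (set (take k ps)). ps ! (k - 1) \<in> \<sigma>}. ell P \<sigma>)"

definition expected_sq_work :: "point set \<Rightarrow> nat \<Rightarrow> real" where
  "expected_sq_work P k =
     (\<Sum>ps\<in>permutations_of_set P. real (stage_work P ps k) ^ 2) / real (card (permutations_of_set P))"

end

theory Submission
  imports Defs "HOL-Analysis.Harmonic_Numbers"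
begin

text \<open>
  Backwards analysis: given the set S = {p_1, ..., p_k}, the point p_k is uniformly distributed
  in S, so E[T_k^2] is the expectation over S of (1/k) times the sum over v in S of W(S,v)^2,
  where W(S,v) is the total conflict size of the Delaunay triangles of S at v. Every triangle has three
  vertices, the triangulation of S has at most 2|S| triangles and every point of P lies in the
  interior of at most one of them, so the sum of the W(S,v) is at most 3 (6|S| + n) <= 21 n and
  the sum of their squares at most (21 n)^2. Summing 441 n^2 / k over k gives the second bound.

  Both uniqueness statements rest on one observation: for two Delaunay triangles the difference of
  the power functions of their circumcircles is affine, non-negative at the vertices of the first
  and non-positive at those of the second. A point that is a positive combination of the first and
  a non-negative combination of the second therefore puts the first triangle on the second
  circumcircle. For the triangle count fix a direction u in general position: every triangle has a
  vertex whose open angle contains u or -u, and the pair (vertex, +-u) determines the triangle.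
\<close>

definition cross :: "point \<Rightarrow> point \<Rightarrow> real" where
  "cross p q = fst p * snd q - snd p * fst q"

lemma cross_swap: "cross q p = - cross p q"
  unfolding cross_def by simp

lemma collinear_if_cross_eq_0:
  assumes "cross (b - a) (c - a) = 0"
  shows "collinear {a, b, c}"
proof -
  obtain p1 p2 q1 q2 where pq: "b - a = (p1, p2)" "c - a = (q1, q2)" by fastforce
  have det: "p1 * q2 = p2 * q1" using assms unfolding pq cross_def by simp
  have "b - a = 0 \<or> (\<exists>k. c - a = k *\<^sub>R (b - a))"
  proof (cases "p1 = 0")
    case True
    then show ?thesis
      using det by (cases "p2 = 0") (auto simp: pq zero_prod_def intro!: exI[of _ "q2 / p2"])
  next
    case False
    then show ?thesis
      using det by (auto simp: pq field_simps intro!: exI[of _ "q1 / p1"])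
  qed
  then have "collinear {0, b - a, c - a}" unfolding collinear_lemma by auto
  then show ?thesis using collinear_3[of b a c] by (simp add: insert_commute)
qed

lemma cross_coordinates:
  assumes "cross p q \<noteq> 0"
  shows "u = (cross u q / cross p q) *\<^sub>R p + (cross p u / cross p q) *\<^sub>R q"
proof -
  obtain p1 p2 q1 q2 u1 u2 where pqu: "p = (p1, p2)" "q = (q1, q2)" "u = (u1, u2)" by fastforce
  define D where "D = p1 * q2 - p2 * q1"
  have "D \<noteq> 0" using assms unfolding pqu cross_def D_def by simp
  then have "u1 = (u1 * q2 - u2 * q1) / D * p1 + (p1 * u2 - p2 * u1) / D * q1"
    "u2 = (u1 * q2 - u2 * q1) / D * p2 + (p1 * u2 - p2 * u1) / D * q2"
    by (simp_all add: field_simps, simp_all add: D_def algebra_simps)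
  then show ?thesis unfolding pqu cross_def D_def by simp
qed

definition in_vertex_cone :: "point set \<Rightarrow> point \<Rightarrow> point \<Rightarrow> bool" where
  "in_vertex_cone \<sigma> v u \<longleftrightarrow>
     (\<exists>b c s t. \<sigma> = {v, b, c} \<and> s > 0 \<and> t > 0 \<and> u = s *\<^sub>R (b - v) + t *\<^sub>R (c - v))"

lemma in_vertex_coneI:
  assumes "\<sigma> = {v, b, c}" "s > 0" "t > 0" "u = s *\<^sub>R (b - v) + t *\<^sub>R (c - v)"
  shows "in_vertex_cone \<sigma> v u"
  using assms unfolding in_vertex_cone_def by blast

lemma vertex_cone_exists_pos:
  assumes u: "u = s *\<^sub>R (b - a) + t *\<^sub>R (c - a)" and "s > 0" "t \<noteq> 0" "s + t \<noteq> 0"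
  shows "\<exists>v\<in>{a, b, c}. in_vertex_cone {a, b, c} v u \<or> in_vertex_cone {a, b, c} v (-u)"
proof -
  consider "t > 0" | "t < 0" "s + t > 0" | "s + t < 0"
    using assms(3,4) by linarith
  then show ?thesis
  proof cases
    case 1
    have "in_vertex_cone {a, b, c} a u"
      by (rule in_vertex_coneI[of _ _ b c s t]) (use assms 1 in auto)
    then show ?thesis by blast
  next
    case 2
    have "in_vertex_cone {a, b, c} b (-u)"
      by (rule in_vertex_coneI[of _ _ a c "s + t" "-t"]) (use u 2 in \<open>auto simp: algebra_simps\<close>)
    then show ?thesis by blast
  next
    case 3
    have "in_vertex_cone {a, b, c} c u"
      by (rule in_vertex_coneI[of _ _ a b "-s-t" s]) (use u assms(2) 3 in \<open>auto simp: algebra_simps\<close>)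
    then show ?thesis by blast
  qed
qed

lemma vertex_cone_exists:
  assumes nc: "\<not> collinear {a, b, c}"
    and gen: "cross u (b - a) \<noteq> 0" "cross u (c - a) \<noteq> 0" "cross u (c - b) \<noteq> 0"
  shows "\<exists>v\<in>{a, b, c}. in_vertex_cone {a, b, c} v u \<or> in_vertex_cone {a, b, c} v (-u)"
proof -
  define D where "D = cross (b - a) (c - a)"
  have "D \<noteq> 0" using nc collinear_if_cross_eq_0 unfolding D_def by blast
  define s where "s = cross u (c - a) / D"
  define t where "t = cross (b - a) u / D"
  have u: "u = s *\<^sub>R (b - a) + t *\<^sub>R (c - a)"
    using cross_coordinates[of "b - a" "c - a" u] \<open>D \<noteq> 0\<close> unfolding s_def t_def D_def by simp
  have "cross u (c - a) + cross (b - a) u = cross u (c - b)"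
    unfolding cross_def by (simp add: algebra_simps)
  then have "s + t = cross u (c - b) / D"
    unfolding s_def t_def by (metis add_divide_distrib)
  then have "s \<noteq> 0" "t \<noteq> 0" "s + t \<noteq> 0"
    using gen \<open>D \<noteq> 0\<close> cross_swap[of "b - a" u] unfolding s_def t_def by simp_all
  show ?thesis
  proof (cases "s > 0")
    case True
    then show ?thesis using vertex_cone_exists_pos[OF u] \<open>t \<noteq> 0\<close> \<open>s + t \<noteq> 0\<close> by blast
  next
    case False
    have "-u = (-s) *\<^sub>R (b - a) + (-t) *\<^sub>R (c - a)" using u by simp
    then have "\<exists>v\<in>{a, b, c}. in_vertex_cone {a, b, c} v (-u) \<or> in_vertex_cone {a, b, c} v (- (-u))"
      by (rule vertex_cone_exists_pos) (use False \<open>s \<noteq> 0\<close> \<open>t \<noteq> 0\<close> \<open>s + t \<noteq> 0\<close> in auto)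
    then show ?thesis by auto
  qed
qed

lemma generic_direction_exists:
  assumes "finite S"
  obtains u where "\<And>x y. x \<in> S \<Longrightarrow> y \<in> S \<Longrightarrow> x \<noteq> y \<Longrightarrow> cross u (x - y) \<noteq> 0"
proof -
  define M where "M = (\<lambda>(x, y). snd (x - y) / fst (x - y)) ` (S \<times> S)"
  have "finite M" unfolding M_def using assms by simp
  then obtain m where m: "m \<notin> M" using ex_new_if_finite[OF infinite_UNIV_char_0] by blast
  have "cross (1, m) (x - y) \<noteq> 0" if "x \<in> S" "y \<in> S" "x \<noteq> y" for x y
  proof
    assume h: "cross (1, m) (x - y) = 0"
    show False
    proof (cases "fst (x - y) = 0")
      case True
      then have "x - y = 0" using h unfolding cross_def by (simp add: prod_eq_iff)
      with that show False by simp
    next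
      case False
      then have "m = snd (x - y) / fst (x - y)" using h unfolding cross_def by (simp add: field_simps)
      then have "m \<in> M" unfolding M_def using that by force
      with m show False by simp
    qed
  qed
  then show ?thesis using that by blast
qed

definition circle_power :: "point \<Rightarrow> real \<Rightarrow> point \<Rightarrow> real" where
  "circle_power z r q = (dist q z)\<^sup>2 - r\<^sup>2"

lemma circle_power_eq_0_iff: "r \<ge> 0 \<Longrightarrow> circle_power z r q = 0 \<longleftrightarrow> q \<in> sphere z r"
  unfolding circle_power_def by (auto simp: dist_commute power2_eq_iff_nonneg)

lemma circle_power_diff_affine:
  fixes z z' :: point and r r' :: real
  assumes "\<alpha> + \<beta> + \<gamma> = 1"
  defines "h \<equiv> \<lambda>x. circle_power z' r' x - circle_power z r x"
  shows "h (\<alpha> *\<^sub>R a + \<beta> *\<^sub>R b + \<gamma> *\<^sub>R c) = \<alpha> * h a + \<beta> * h b + \<gamma> * h c"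
proof -
  have h: "h x = 2 * inner x (z - z') + ((norm z')\<^sup>2 - r'\<^sup>2) - ((norm z)\<^sup>2 - r\<^sup>2)" for x
    unfolding h_def circle_power_def dist_norm power2_norm_eq_inner
    by (simp add: inner_diff_left inner_diff_right inner_commute algebra_simps)
  show ?thesis using assms(1) unfolding h by (simp add: inner_add_left) algebra
qed

lemma delaunay_trianglesE:
  assumes "\<sigma> \<in> delaunay_triangles S"
  obtains z r where "\<sigma> \<subseteq> S" "card \<sigma> = 3" "\<not> collinear \<sigma>" "\<sigma> \<subseteq> sphere z r" "r \<ge> 0"
    "\<And>q. q \<in> \<sigma> \<Longrightarrow> circle_power z r q = 0" "\<And>q. q \<in> S \<Longrightarrow> circle_power z r q \<ge> 0"
proof -
  from assms obtain z r where \<sigma>: "\<sigma> \<subseteq> S" "card \<sigma> = 3" "\<not> collinear \<sigma>" "\<sigma> \<subseteq> sphere z r"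
    and empty: "\<And>q. q \<in> S \<Longrightarrow> r \<le> dist q z"
    unfolding delaunay_triangles_def by blast
  obtain x where "x \<in> \<sigma>" using \<sigma>(2) by (metis card.empty ex_in_conv zero_neq_numeral)
  then have "r \<ge> 0" using \<sigma>(4) by (metis mem_sphere subsetD zero_le_dist)
  moreover have "circle_power z r q \<ge> 0" if "q \<in> S" for q
    using empty[OF that] \<open>r \<ge> 0\<close> unfolding circle_power_def by (simp add: power_mono)
  ultimately show ?thesis
    using that \<sigma> circle_power_eq_0_iff by blast
qed

lemma finite_delaunay_triangles: "finite S \<Longrightarrow> finite (delaunay_triangles S)"
  unfolding delaunay_triangles_def by (rule finite_subset[of _ "Pow S"]) auto

lemma general_position_not_collinear:
  assumes "general_position P" "a \<in> P" "b \<in> P" "c \<in> P" "a \<noteq> b" "a \<noteq> c" "b \<noteq> c"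
  shows "\<not> collinear {a, b, c}"
proof -
  have "\<forall>a\<in>P. \<forall>b\<in>P. \<forall>c\<in>P. a \<noteq> b \<and> a \<noteq> c \<and> b \<noteq> c \<longrightarrow> \<not> collinear {a, b, c}"
    using assms(1) unfolding general_position_def by (rule conjunct1)
  then show ?thesis using assms(2-) by blast
qed

lemma general_position_not_cocircular:
  assumes "general_position P" "{a, b, c, d} \<subseteq> P" "card {a, b, c, d} = 4"
  shows "\<not> {a, b, c, d} \<subseteq> sphere z r"
proof -
  have "\<forall>a\<in>P. \<forall>b\<in>P. \<forall>c\<in>P. \<forall>d\<in>P. card {a, b, c, d} = 4 \<longrightarrow>
      \<not> (\<exists>z r. {a, b, c, d} \<subseteq> sphere z r)"
    using assms(1) unfolding general_position_def by (rule conjunct2)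
  moreover have "a \<in> P" "b \<in> P" "c \<in> P" "d \<in> P" using assms(2) by auto
  ultimately show ?thesis using assms(3) by blast
qed

lemma cocircular_triangles_eq:
  assumes gp: "general_position P" and "\<sigma> \<subseteq> P" "\<tau> \<subseteq> P" "card \<sigma> = 3" "card \<tau> = 3"
    and "\<sigma> \<subseteq> sphere z r" "\<tau> \<subseteq> sphere z r"
  shows "\<sigma> = \<tau>"
proof (rule ccontr)
  assume "\<sigma> \<noteq> \<tau>"
  moreover have "finite \<sigma>" using assms(4) by (intro card_ge_0_finite) simp
  ultimately have "\<not> \<tau> \<subseteq> \<sigma>" using card_subset_eq assms(4,5) by metis
  then obtain d where d: "d \<in> \<tau>" "d \<notin> \<sigma>" by blast
  obtain a b c where abc: "\<sigma> = {a, b, c}" "a \<noteq> b" "b \<noteq> c" "a \<noteq> c"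
    using assms(4) card_3_iff by metis
  have "{a, b, c, d} \<subseteq> P" using abc d assms(2,3) by auto
  moreover have "card {a, b, c, d} = 4" using abc d by (auto simp: card_insert_if)
  ultimately have "\<not> {a, b, c, d} \<subseteq> sphere z r" by (rule general_position_not_cocircular[OF gp])
  moreover have "{a, b, c, d} \<subseteq> sphere z r" using abc d assms(6,7) by blast
  ultimately show False by contradiction
qed

lemma barycentric_coords_pos:
  assumes gp: "general_position P" and "p \<in> P" "{a, b, c} \<subseteq> P" "p \<notin> {a, b, c}"
    and "a \<noteq> b" "b \<noteq> c" "a \<noteq> c"
    and p: "p = \<alpha> *\<^sub>R a + \<beta> *\<^sub>R b + \<gamma> *\<^sub>R c" "\<alpha> + \<beta> + \<gamma> = 1"
    and "\<alpha> \<ge> 0" "\<beta> \<ge> 0" "\<gamma> \<ge> 0"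
  shows "\<alpha> > 0" "\<beta> > 0" "\<gamma> > 0"
proof -
  have off_line: "p \<noteq> \<mu> *\<^sub>R x + (1 - \<mu>) *\<^sub>R y" if "x \<in> {a, b, c}" "y \<in> {a, b, c}" "x \<noteq> y" for x y \<mu>
  proof
    assume "p = \<mu> *\<^sub>R x + (1 - \<mu>) *\<^sub>R y"
    then have "collinear {x, p, y}" unfolding collinear_3_expand by blast
    moreover have "x \<in> P" "y \<in> P" "p \<noteq> x" "p \<noteq> y" using that assms(3,4) by auto
    ultimately show False using general_position_not_collinear[OF gp] \<open>p \<in> P\<close> \<open>x \<noteq> y\<close> by blast
  qed
  have "\<alpha> \<noteq> 0"
  proof
    assume "\<alpha> = 0"
    then have "p = \<beta> *\<^sub>R b + (1 - \<beta>) *\<^sub>R c" using p by (simp add: eq_diff_eq')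
    then show False using off_line[of b c \<beta>] assms(6) by simp
  qed
  moreover have "\<beta> \<noteq> 0"
  proof
    assume "\<beta> = 0"
    then have "p = \<alpha> *\<^sub>R a + (1 - \<alpha>) *\<^sub>R c" using p by (simp add: eq_diff_eq')
    then show False using off_line[of a c \<alpha>] assms(7) by simp
  qed
  moreover have "\<gamma> \<noteq> 0"
  proof
    assume "\<gamma> = 0"
    then have "p = \<alpha> *\<^sub>R a + (1 - \<alpha>) *\<^sub>R b" using p by (simp add: eq_diff_eq')
    then show False using off_line[of a b \<alpha>] assms(5) by simp
  qed
  ultimately show "\<alpha> > 0" "\<beta> > 0" "\<gamma> > 0" using assms(10-12) by auto
qed

lemma delaunay_triangles_eq_if_common_point:
  assumes gp: "general_position P" and "S \<subseteq> P"
    and \<sigma>: "{a, b, c} \<in> delaunay_triangles S" and \<tau>: "{a', b', c'} \<in> delaunay_triangles S"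
    and x: "\<alpha> *\<^sub>R a + \<beta> *\<^sub>R b + \<gamma> *\<^sub>R c = \<alpha>' *\<^sub>R a' + \<beta>' *\<^sub>R b' + \<gamma>' *\<^sub>R c'"
      "\<alpha> + \<beta> + \<gamma> = 1" "\<alpha>' + \<beta>' + \<gamma>' = 1"
    and pos: "\<alpha> > 0 \<or> a \<in> {a', b', c'}" "\<beta> > 0 \<or> b \<in> {a', b', c'}" "\<gamma> > 0 \<or> c \<in> {a', b', c'}"
    and nonneg: "\<alpha>' \<ge> 0 \<or> a' \<in> {a, b, c}" "\<beta>' \<ge> 0 \<or> b' \<in> {a, b, c}" "\<gamma>' \<ge> 0 \<or> c' \<in> {a, b, c}"
  shows "{a, b, c} = {a', b', c'}"
proof -
  obtain z r where z: "{a, b, c} \<subseteq> S" "card {a, b, c} = 3" "\<not> collinear {a, b, c}"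
    "{a, b, c} \<subseteq> sphere z r" "r \<ge> 0" "\<And>q. q \<in> {a, b, c} \<Longrightarrow> circle_power z r q = 0"
    "\<And>q. q \<in> S \<Longrightarrow> circle_power z r q \<ge> 0"
    using delaunay_trianglesE[OF \<sigma>] by blast
  obtain z' r' where z': "{a', b', c'} \<subseteq> S" "card {a', b', c'} = 3" "\<not> collinear {a', b', c'}"
    "{a', b', c'} \<subseteq> sphere z' r'" "r' \<ge> 0" "\<And>q. q \<in> {a', b', c'} \<Longrightarrow> circle_power z' r' q = 0"
    "\<And>q. q \<in> S \<Longrightarrow> circle_power z' r' q \<ge> 0"
    using delaunay_trianglesE[OF \<tau>] by blast
  define h where "h x = circle_power z' r' x - circle_power z r x" for x
  have balance: "\<alpha> * h a + \<beta> * h b + \<gamma> * h c = \<alpha>' * h a' + \<beta>' * h b' + \<gamma>' * h c'"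
    using circle_power_diff_affine[OF x(2), where z=z and r=r and z'=z' and r'=r' and a=a and b=b and c=c]
      circle_power_diff_affine[OF x(3), where z=z and r=r and z'=z' and r'=r' and a=a' and b=b' and c=c'] x(1)
    unfolding h_def by simp
  have h_\<sigma>: "h y = circle_power z' r' y" if "y \<in> {a, b, c}" for y
    using z(6)[OF that] unfolding h_def by simp
  have h_\<tau>: "h y = - circle_power z r y" if "y \<in> {a', b', c'}" for y
    using z'(6)[OF that] unfolding h_def by simp
  have ge: "w * h y \<ge> 0" if "y \<in> {a, b, c}" "w > 0 \<or> y \<in> {a', b', c'}" for w y
  proof (cases "w > 0")
    case True
    have "y \<in> S" using that(1) z(1) by blast
    then show ?thesis using True h_\<sigma>[OF that(1)] z'(7) by simp
  next
    case False
    then show ?thesis using that h_\<sigma> z'(6) by simp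
  qed
  have le: "w * h y \<le> 0" if "y \<in> {a', b', c'}" "w \<ge> 0 \<or> y \<in> {a, b, c}" for w y
  proof (cases "w \<ge> 0")
    case True
    have "y \<in> S" using that(1) z'(1) by blast
    then show ?thesis using True h_\<tau>[OF that(1)] z(7) by (simp add: mult_nonneg_nonpos)
  next
    case False
    then show ?thesis using that h_\<tau> z(6) by simp
  qed
  have "\<alpha> * h a \<ge> 0" "\<beta> * h b \<ge> 0" "\<gamma> * h c \<ge> 0" using ge pos by blast+
  moreover have "\<alpha>' * h a' \<le> 0" "\<beta>' * h b' \<le> 0" "\<gamma>' * h c' \<le> 0" using le nonneg by blast+
  ultimately have "\<alpha> * h a = 0" "\<beta> * h b = 0" "\<gamma> * h c = 0" using balance by linarith+
  moreover have "circle_power z' r' y = 0"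
    if "y \<in> {a, b, c}" "w * h y = 0" "w > 0 \<or> y \<in> {a', b', c'}" for w y
    using that h_\<sigma>[OF that(1)] z'(6) by (cases "w > 0") simp_all
  ultimately have "circle_power z' r' a = 0" "circle_power z' r' b = 0" "circle_power z' r' c = 0"
    using pos by blast+
  then have "{a, b, c} \<subseteq> sphere z' r'" using circle_power_eq_0_iff[OF z'(5)] by simp
  then show ?thesis
    using cocircular_triangles_eq[OF gp _ _ z(2) z'(2) _ z'(4)] z(1) z'(1) \<open>S \<subseteq> P\<close> by blast
qed

lemma delaunay_vertex_cone_unique:
  assumes gp: "general_position P" and "S \<subseteq> P"
    and "\<sigma> \<in> delaunay_triangles S" "\<tau> \<in> delaunay_triangles S"
    and "in_vertex_cone \<sigma> v u" "in_vertex_cone \<tau> v u"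
  shows "\<sigma> = \<tau>"
proof -
  obtain b c s t where bc: "\<sigma> = {v, b, c}" "s > 0" "t > 0" "u = s *\<^sub>R (b - v) + t *\<^sub>R (c - v)"
    using assms(5) unfolding in_vertex_cone_def by blast
  obtain b' c' s' t' where bc': "\<tau> = {v, b', c'}" "s' > 0" "t' > 0"
    "u = s' *\<^sub>R (b' - v) + t' *\<^sub>R (c' - v)"
    using assms(6) unfolding in_vertex_cone_def by blast
  have "(1 - s - t) *\<^sub>R v + s *\<^sub>R b + t *\<^sub>R c = (1 - s' - t') *\<^sub>R v + s' *\<^sub>R b' + t' *\<^sub>R c'"
    using bc(4) bc'(4) by (simp add: algebra_simps)
  then show ?thesis
    using delaunay_triangles_eq_if_common_point[OF gp \<open>S \<subseteq> P\<close>] assms(3,4) bc bc' by simp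
qed

lemma delaunay_interior_unique:
  assumes gp: "general_position P" and "S \<subseteq> P" "p \<in> P"
    and \<sigma>: "\<sigma> \<in> delaunay_triangles S" and \<tau>: "\<tau> \<in> delaunay_triangles S"
    and "p \<notin> \<sigma>" "p \<in> convex hull \<sigma>" "p \<in> convex hull \<tau>"
  shows "\<sigma> = \<tau>"
proof -
  have "card \<sigma> = 3" "\<sigma> \<subseteq> P" "card \<tau> = 3"
    using \<sigma> \<tau> \<open>S \<subseteq> P\<close> unfolding delaunay_triangles_def by auto
  then obtain a b c a' b' c' where abc: "\<sigma> = {a, b, c}" "a \<noteq> b" "b \<noteq> c" "a \<noteq> c"
    and abc': "\<tau> = {a', b', c'}"
    using card_3_iff by metis
  obtain \<alpha> \<beta> \<gamma> where p: "p = \<alpha> *\<^sub>R a + \<beta> *\<^sub>R b + \<gamma> *\<^sub>R c" "\<alpha> + \<beta> + \<gamma> = 1"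
    "\<alpha> \<ge> 0" "\<beta> \<ge> 0" "\<gamma> \<ge> 0"
    using assms(7) unfolding abc convex_hull_3 by blast
  obtain \<alpha>' \<beta>' \<gamma>' where p': "p = \<alpha>' *\<^sub>R a' + \<beta>' *\<^sub>R b' + \<gamma>' *\<^sub>R c'"
    "\<alpha>' + \<beta>' + \<gamma>' = 1" "\<alpha>' \<ge> 0" "\<beta>' \<ge> 0" "\<gamma>' \<ge> 0"
    using assms(8) unfolding abc' convex_hull_3 by blast
  have "\<alpha> > 0" "\<beta> > 0" "\<gamma> > 0"
    using barycentric_coords_pos[OF gp \<open>p \<in> P\<close> _ _ abc(2-4) p] \<open>\<sigma> \<subseteq> P\<close> assms(6) abc(1) by auto
  then show ?thesis
    using delaunay_triangles_eq_if_common_point[OF gp \<open>S \<subseteq> P\<close>, of a b c a' b' c' \<alpha> \<beta> \<gamma> \<alpha>' \<beta>' \<gamma>']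
      \<sigma> \<tau> p p' abc abc' by simp
qed

lemma card_vertex_cone_triangles_le:
  assumes gp: "general_position P" and "S \<subseteq> P" "finite S"
  shows "card {\<sigma> \<in> delaunay_triangles S. \<exists>v. in_vertex_cone \<sigma> v u} \<le> card S"
proof -
  define D where "D = delaunay_triangles S"
  define f where "f v = (THE \<sigma>. \<sigma> \<in> D \<and> in_vertex_cone \<sigma> v u)" for v
  have "{\<sigma> \<in> D. \<exists>v. in_vertex_cone \<sigma> v u} \<subseteq> f ` S"
  proof
    fix \<sigma> assume "\<sigma> \<in> {\<sigma> \<in> D. \<exists>v. in_vertex_cone \<sigma> v u}"
    then obtain v where \<sigma>: "\<sigma> \<in> D" "in_vertex_cone \<sigma> v u" by blast
    then have "v \<in> S" unfolding D_def delaunay_triangles_def in_vertex_cone_def by auto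
    moreover have "f v = \<sigma>" unfolding f_def
    proof (rule the_equality)
      fix \<tau> assume "\<tau> \<in> D \<and> in_vertex_cone \<tau> v u"
      then show "\<tau> = \<sigma>"
        using delaunay_vertex_cone_unique[OF gp \<open>S \<subseteq> P\<close>, of \<tau> \<sigma> v u] \<sigma> unfolding D_def by blast
    qed (use \<sigma> in blast)
    ultimately show "\<sigma> \<in> f ` S" by blast
  qed
  then have "card {\<sigma> \<in> D. \<exists>v. in_vertex_cone \<sigma> v u} \<le> card (f ` S)"
    using \<open>finite S\<close> by (intro card_mono) auto
  also have "\<dots> \<le> card S" using \<open>finite S\<close> by (rule card_image_le)
  finally show ?thesis unfolding D_def .
qed

lemma card_delaunay_triangles_le:
  assumes gp: "general_position P" and "S \<subseteq> P" "finite S"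
  shows "card (delaunay_triangles S) \<le> 2 * card S"
proof -
  obtain u where u: "\<And>x y. x \<in> S \<Longrightarrow> y \<in> S \<Longrightarrow> x \<noteq> y \<Longrightarrow> cross u (x - y) \<noteq> 0"
    using generic_direction_exists[OF \<open>finite S\<close>] by blast
  define C where "C w = {\<sigma> \<in> delaunay_triangles S. \<exists>v. in_vertex_cone \<sigma> v w}" for w
  have "delaunay_triangles S \<subseteq> C u \<union> C (-u)"
  proof
    fix \<sigma> assume \<sigma>: "\<sigma> \<in> delaunay_triangles S"
    then have "\<sigma> \<subseteq> S" "card \<sigma> = 3" "\<not> collinear \<sigma>" unfolding delaunay_triangles_def by auto
    then obtain a b c where abc: "\<sigma> = {a, b, c}" "a \<noteq> b" "b \<noteq> c" "a \<noteq> c" "{a, b, c} \<subseteq> S"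
      using card_3_iff by metis
    have "cross u (b - a) \<noteq> 0" "cross u (c - a) \<noteq> 0" "cross u (c - b) \<noteq> 0"
      using u abc by auto
    then obtain v where "in_vertex_cone \<sigma> v u \<or> in_vertex_cone \<sigma> v (-u)"
      using vertex_cone_exists \<open>\<not> collinear \<sigma>\<close> abc(1) by blast
    then show "\<sigma> \<in> C u \<union> C (-u)" using \<sigma> unfolding C_def by blast
  qed
  then have "card (delaunay_triangles S) \<le> card (C u \<union> C (-u))"
    using finite_delaunay_triangles[OF \<open>finite S\<close>] by (intro card_mono) (auto simp: C_def)
  also have "\<dots> \<le> card (C u) + card (C (-u))" by (rule card_Un_le)
  also have "\<dots> \<le> 2 * card S"
    unfolding C_def mult_2 by (intro add_mono card_vertex_cone_triangles_le[OF gp \<open>S \<subseteq> P\<close> \<open>finite S\<close>])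
  finally show ?thesis .
qed

lemma sum_card_delaunay_interiors_le:
  assumes gp: "general_position P" and "finite P" "S \<subseteq> P"
  shows "(\<Sum>\<sigma>\<in>delaunay_triangles S. card {p \<in> P. p \<notin> \<sigma> \<and> p \<in> convex hull \<sigma>}) \<le> card P"
proof -
  define D where "D = delaunay_triangles S"
  have "finite D" unfolding D_def using assms(2,3) finite_subset finite_delaunay_triangles by blast
  have "(\<Sum>\<sigma>\<in>D. card {p \<in> P. p \<notin> \<sigma> \<and> p \<in> convex hull \<sigma>})
      = (\<Sum>\<sigma>\<in>D. \<Sum>p\<in>{p \<in> P. p \<notin> \<sigma> \<and> p \<in> convex hull \<sigma>}. 1)" by simp
  also have "\<dots> = (\<Sum>p\<in>P. \<Sum>\<sigma>\<in>{\<sigma> \<in> D. p \<notin> \<sigma> \<and> p \<in> convex hull \<sigma>}. 1)"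
    by (rule sum.swap_restrict[OF \<open>finite D\<close> \<open>finite P\<close>])
  also have "\<dots> \<le> (\<Sum>p\<in>P. 1)"
  proof (rule sum_mono)
    fix p assume "p \<in> P"
    have "card {\<sigma> \<in> D. p \<notin> \<sigma> \<and> p \<in> convex hull \<sigma>} \<le> Suc 0"
      using \<open>finite D\<close> delaunay_interior_unique[OF gp \<open>S \<subseteq> P\<close> \<open>p \<in> P\<close>]
      unfolding D_def by (subst card_le_Suc0_iff_eq) auto
    then show "(\<Sum>\<sigma>\<in>{\<sigma> \<in> D. p \<notin> \<sigma> \<and> p \<in> convex hull \<sigma>}. 1) \<le> (1::nat)" by simp
  qed
  finally show ?thesis unfolding D_def by simp
qed

lemma sum_ell_delaunay_le:
  assumes gp: "general_position P" and "finite P" "S \<subseteq> P"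
  shows "(\<Sum>\<sigma>\<in>delaunay_triangles S. ell P \<sigma>) \<le> 6 * card S + card P"
proof -
  define D where "D = delaunay_triangles S"
  define interior_pts where "interior_pts \<sigma> = {p \<in> P. p \<notin> \<sigma> \<and> p \<in> convex hull \<sigma>}" for \<sigma>
  have "finite S" using assms(2,3) finite_subset by blast
  have ell_le: "ell P \<sigma> \<le> 3 + card (interior_pts \<sigma>)" if "\<sigma> \<in> D" for \<sigma>
  proof -
    have "card \<sigma> = 3" using that unfolding D_def delaunay_triangles_def by auto
    have "{p \<in> P. p \<in> convex hull \<sigma>} \<subseteq> \<sigma> \<union> interior_pts \<sigma>" unfolding interior_pts_def by auto
    then have "ell P \<sigma> \<le> card (\<sigma> \<union> interior_pts \<sigma>)"
      unfolding ell_def using \<open>card \<sigma> = 3\<close> \<open>finite P\<close>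
      by (intro card_mono) (auto simp: interior_pts_def intro: card_ge_0_finite)
    also have "\<dots> \<le> card \<sigma> + card (interior_pts \<sigma>)" by (rule card_Un_le)
    finally show ?thesis using \<open>card \<sigma> = 3\<close> by simp
  qed
  have "(\<Sum>\<sigma>\<in>D. ell P \<sigma>) \<le> (\<Sum>\<sigma>\<in>D. 3 + card (interior_pts \<sigma>))" by (rule sum_mono) (rule ell_le)
  also have "\<dots> = 3 * card D + (\<Sum>\<sigma>\<in>D. card (interior_pts \<sigma>))" by (simp add: sum.distrib)
  also have "\<dots> \<le> 6 * card S + card P"
    using card_delaunay_triangles_le[OF gp \<open>S \<subseteq> P\<close> \<open>finite S\<close>] sum_card_delaunay_interiors_le[OF assms]
    unfolding D_def interior_pts_def by linarith
  finally show ?thesis unfolding D_def .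
qed

definition vertex_work :: "point set \<Rightarrow> point set \<Rightarrow> point \<Rightarrow> nat" where
  "vertex_work P S v = (\<Sum>\<sigma>\<in>{\<sigma> \<in> delaunay_triangles S. v \<in> \<sigma>}. ell P \<sigma>)"

lemma sum_vertex_work_le:
  assumes gp: "general_position P" and "finite P" "S \<subseteq> P"
  shows "(\<Sum>v\<in>S. vertex_work P S v) \<le> 21 * card P"
proof -
  define D where "D = delaunay_triangles S"
  have "finite S" using assms(2,3) finite_subset by blast
  then have "finite D" unfolding D_def by (rule finite_delaunay_triangles)
  have "(\<Sum>v\<in>S. vertex_work P S v) = (\<Sum>\<sigma>\<in>D. \<Sum>v\<in>{v \<in> S. v \<in> \<sigma>}. ell P \<sigma>)"
    unfolding vertex_work_def D_def by (rule sum.swap_restrict[OF \<open>finite S\<close> \<open>finite D\<close>[unfolded D_def]])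
  also have "\<dots> = (\<Sum>\<sigma>\<in>D. 3 * ell P \<sigma>)"
  proof (rule sum.cong[OF refl])
    fix \<sigma> assume "\<sigma> \<in> D"
    then have "{v \<in> S. v \<in> \<sigma>} = \<sigma>" "card \<sigma> = 3" unfolding D_def delaunay_triangles_def by auto
    then show "(\<Sum>v\<in>{v \<in> S. v \<in> \<sigma>}. ell P \<sigma>) = 3 * ell P \<sigma>" by simp
  qed
  also have "\<dots> = 3 * (\<Sum>\<sigma>\<in>D. ell P \<sigma>)" by (simp add: sum_distrib_left)
  also have "\<dots> \<le> 3 * (6 * card S + card P)"
    using sum_ell_delaunay_le[OF assms] unfolding D_def by simp
  also have "\<dots> \<le> 21 * card P" using card_mono[OF assms(2,3)] by simp
  finally show ?thesis .
qed

lemma sum_squares_le_square_sum: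
  fixes f :: "'a \<Rightarrow> nat"
  shows "(\<Sum>x\<in>A. f x ^ 2) \<le> (\<Sum>x\<in>A. f x) ^ 2"
proof (cases "finite A")
  case True
  have "(\<Sum>x\<in>A. f x ^ 2) \<le> (\<Sum>x\<in>A. f x * (\<Sum>y\<in>A. f y))"
    using True by (intro sum_mono) (simp add: power2_eq_square member_le_sum)
  also have "\<dots> = (\<Sum>x\<in>A. f x) ^ 2" by (simp add: power2_eq_square sum_distrib_right)
  finally show ?thesis .
qed simp

lemma sum_vertex_work_squares_le:
  assumes "general_position P" "finite P" "S \<subseteq> P"
  shows "(\<Sum>v\<in>S. vertex_work P S v ^ 2) \<le> (21 * card P) ^ 2"
  using sum_squares_le_square_sum[of "vertex_work P S" S] sum_vertex_work_le[OF assms]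
  by (meson order_trans power_mono zero_le)

definition swap_entries :: "nat \<Rightarrow> nat \<Rightarrow> 'a list \<Rightarrow> 'a list" where
  "swap_entries i j xs = xs[j := xs ! i, i := xs ! j]"

lemma length_swap_entries [simp]: "length (swap_entries i j xs) = length xs"
  unfolding swap_entries_def by simp

lemma swap_entries_swap_entries:
  "i < length xs \<Longrightarrow> j < length xs \<Longrightarrow> swap_entries i j (swap_entries i j xs) = xs"
  unfolding swap_entries_def by (rule nth_equalityI) (auto simp: nth_list_update)

lemma nth_swap_entries_left: "i < length xs \<Longrightarrow> j < length xs \<Longrightarrow> swap_entries i j xs ! i = xs ! j"
  unfolding swap_entries_def by (auto simp: nth_list_update)

lemma mset_swap_entries: "i < length xs \<Longrightarrow> j < length xs \<Longrightarrow> mset (swap_entries i j xs) = mset xs"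
  unfolding swap_entries_def by (rule mset_swap)

lemma take_swap_entries: "i < k \<Longrightarrow> j < k \<Longrightarrow> take k (swap_entries i j xs) = swap_entries i j (take k xs)"
  unfolding swap_entries_def by (simp add: take_update_swap)

lemma swap_entries_permutations_of_set:
  assumes "xs \<in> permutations_of_set A" "i < length xs" "j < length xs"
  shows "swap_entries i j xs \<in> permutations_of_set A"
  using assms mset_swap_entries[OF assms(2,3)]
  by (metis mset_eq_imp_distinct_iff mset_eq_setD permutations_of_setD permutations_of_setI)

lemma set_take_swap_entries:
  assumes "i < k" "j < k" "k \<le> length xs"
  shows "set (take k (swap_entries i j xs)) = set (take k xs)"
  using assms by (simp add: take_swap_entries mset_swap_entries flip: set_mset_mset)

lemma sum_permutations_last_of_prefix:
  fixes f :: "'a set \<Rightarrow> 'a \<Rightarrow> 'b :: comm_semiring_1"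
  assumes "k \<le> card A"
  shows "of_nat k * (\<Sum>ps\<in>permutations_of_set A. f (set (take k ps)) (ps ! (k - 1)))
       = (\<Sum>ps\<in>permutations_of_set A. \<Sum>w\<in>set (take k ps). f (set (take k ps)) w)"
proof -
  define PP where "PP = permutations_of_set A"
  have len: "k \<le> length ps" if "ps \<in> PP" for ps
    using that assms unfolding PP_def by (simp add: length_finite_permutations_of_set)
  have any_position: "(\<Sum>ps\<in>PP. f (set (take k ps)) (ps ! (k - 1))) = (\<Sum>ps\<in>PP. f (set (take k ps)) (ps ! j))"
    if "j < k" for j
  proof -
    have "swap_entries j (k - 1) (swap_entries j (k - 1) ps) = ps"
      "swap_entries j (k - 1) ps \<in> PP"
      "f (set (take k (swap_entries j (k - 1) ps))) (swap_entries j (k - 1) ps ! j)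
         = f (set (take k ps)) (ps ! (k - 1))" if "ps \<in> PP" for ps
      using len[OF that] \<open>j < k\<close> that
      by (simp_all add: swap_entries_swap_entries swap_entries_permutations_of_set PP_def
            set_take_swap_entries nth_swap_entries_left)
    then show ?thesis
      by (intro sum.reindex_bij_witness[of _ "swap_entries j (k - 1)" "swap_entries j (k - 1)"]) auto
  qed
  have "of_nat k * (\<Sum>ps\<in>PP. f (set (take k ps)) (ps ! (k - 1)))
      = (\<Sum>j<k. \<Sum>ps\<in>PP. f (set (take k ps)) (ps ! (k - 1)))" by simp
  also have "\<dots> = (\<Sum>j<k. \<Sum>ps\<in>PP. f (set (take k ps)) (ps ! j))"
    by (rule sum.cong[OF refl], rule any_position) simp
  also have "\<dots> = (\<Sum>ps\<in>PP. \<Sum>j<k. f (set (take k ps)) (ps ! j))" by (rule sum.swap)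
  also have "\<dots> = (\<Sum>ps\<in>PP. \<Sum>w\<in>set (take k ps). f (set (take k ps)) w)"
  proof (rule sum.cong[OF refl])
    fix ps assume "ps \<in> PP"
    then have "inj_on ((!) ps) {..<k}" "(!) ps ` {..<k} = set (take k ps)"
      using len[OF \<open>ps \<in> PP\<close>] permutations_of_setD(2)[of ps A] unfolding PP_def
      by (auto simp: inj_on_def nth_eq_iff_index_eq nth_image lessThan_atLeast0)
    then show "(\<Sum>j<k. f (set (take k ps)) (ps ! j)) = (\<Sum>w\<in>set (take k ps). f (set (take k ps)) w)"
      by (metis sum.reindex_cong)
  qed
  finally show ?thesis unfolding PP_def .
qed

lemma expected_sq_work_le:
  assumes "finite P" "general_position P" "1 \<le> k" "k \<le> card P"
  shows "expected_sq_work P k \<le> 441 * real (card P) ^ 2 / real k"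
proof -
  define PP where "PP = permutations_of_set P"
  have "real k * (\<Sum>ps\<in>PP. real (stage_work P ps k) ^ 2)
      = (\<Sum>ps\<in>PP. \<Sum>w\<in>set (take k ps). real (vertex_work P (set (take k ps)) w) ^ 2)"
    unfolding PP_def stage_work_def vertex_work_def[symmetric]
    by (rule sum_permutations_last_of_prefix[OF assms(4)])
  also have "\<dots> \<le> (\<Sum>ps\<in>PP. 441 * real (card P) ^ 2)"
  proof (rule sum_mono)
    fix ps assume "ps \<in> PP"
    then have "set (take k ps) \<subseteq> P"
      unfolding PP_def using set_take_subset permutations_of_setD(1) by metis
    then have "(\<Sum>w\<in>set (take k ps). vertex_work P (set (take k ps)) w ^ 2) \<le> (21 * card P) ^ 2"
      using sum_vertex_work_squares_le assms(1,2) by blast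
    then show "(\<Sum>w\<in>set (take k ps). real (vertex_work P (set (take k ps)) w) ^ 2)
        \<le> 441 * real (card P) ^ 2"
      by (simp flip: of_nat_power of_nat_sum of_nat_le_iff)
  qed
  also have "\<dots> = real (card PP) * (441 * real (card P) ^ 2)" by simp
  finally have "real k * (\<Sum>ps\<in>PP. real (stage_work P ps k) ^ 2) \<le> real (card PP) * (441 * real (card P) ^ 2)" .
  moreover have "card PP > 0" unfolding PP_def using assms(1) by simp
  ultimately show ?thesis
    using assms(3) unfolding expected_sq_work_def PP_def[symmetric]
    by (simp add: field_simps)
qed

lemma harm_le_one_plus_ln: "n \<ge> 1 \<Longrightarrow> harm n \<le> 1 + ln (real n)"
  using euler_mascheroni_sequence_decreasing[of 1 n] by (simp add: harm_def)

lemma sum_expected_sq_work_le: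
  assumes "finite P" "general_position P" "2 \<le> card P"
  shows "(\<Sum>k=1..card P. expected_sq_work P k) \<le> 1323 * real (card P) ^ 2 * ln (real (card P))"
proof -
  define n where "n = card P"
  have "ln 2 \<le> ln (real n)" using assms(3) unfolding n_def by simp
  then have "2 / 3 \<le> ln (real n)" using ln2_ge_two_thirds by linarith
  have "(\<Sum>k=1..n. expected_sq_work P k) \<le> (\<Sum>k=1..n. 441 * real n ^ 2 / real k)"
    using expected_sq_work_le[OF assms(1,2)] unfolding n_def by (intro sum_mono) auto
  also have "\<dots> = 441 * real n ^ 2 * harm n"
    by (simp add: harm_def sum_distrib_left divide_inverse)
  also have "\<dots> \<le> 441 * real n ^ 2 * (3 * ln (real n))"
    using harm_le_one_plus_ln[of n] assms(3) \<open>2 / 3 \<le> ln (real n)\<close> unfolding n_def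
    by (intro mult_left_mono) auto
  finally show ?thesis unfolding n_def by simp
qed

theorem mainTheorem6:
  shows "(\<exists>C::real. \<forall>P k. finite P \<longrightarrow> general_position P \<longrightarrow> 1 \<le> k \<longrightarrow> k \<le> card P \<longrightarrow>
            expected_sq_work P k \<le> C * real (card P) ^ 2 / real k)
       \<and> (\<exists>C::real. \<forall>P. finite P \<longrightarrow> general_position P \<longrightarrow> 2 \<le> card P \<longrightarrow>
            (\<Sum>k=1..card P. expected_sq_work P k) \<le> C * real (card P) ^ 2 * ln (real (card P)))"
  using expected_sq_work_le sum_expected_sq_work_le by blast

end
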